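(* For every $\forall^+$ type $P$, $I\ \llbracket P\cdot P\to P\rrbracket_e\ I$; equivalently, whenever $x\,\llbracket P\rrbracket_e\,y$ and $y\,\llbracket P\rrbracket_e\,z$, also $x\,\llbracket P\rrbracket_e\,z$.
   Context: Terms are those of the pure untyped $\lambda$-calculus, up to $\alpha$-equivalence; $=_{\beta\eta}$ is $\beta\eta$-convertibility; $I:=\lambda x.x$. Relational types: $R ::= X \mid R\to R' \mid \forall X.R \mid R^{\cup} \mid R\cdot R' \mid t$ (last form: promotion of a term). A relation on terms is $\beta\eta$-closed if closed under replacing either related term by a $\beta\eta$-equal one; $\mathcal{R}$ is the set of such relations; environments map type variables to $\mathcal{R}$. Interpretation: $\llbracket X\rrbracket_\gamma=\gamma(X)$; $t\,\llbracket R\to R'\rrbracket_\gamma\,t'$ iff for all $a,a'$ with $a\,\llbracket R\rrbracket_\gamma\,a'$, $t\,a\,\llbracket R'\rrbracket_\gamma\,t'\,a'$; $\llbracket \forall X.R\rrbracket_\gamma=\bigcap_{r\in\mathcal{R}}\llbracket R\rrbracket_{\gamma[X\mapsto r]}$; $t\,\llbracket R^\cup\rrbracket_\gamma\,t'$ iff $t'\,\llbracket R\rrbracket_\gamma\,t$; $t\,\llbracket R\cdot R'\rrbracket_\gamma\,t'$ iff $\exists t''$, $t\,\llbracket R\rrbracket_\gamma\,t''$ and $t''\,\llbracket R'\rrbracket_\gamma\,t'$; $\llbracket \hat t\rrbracket_\gamma=\{(t,t')\mid \hat t\,t=_{\beta\eta}t'\}$. $e$ is the environment mapping every type variable to $=_{\beta\eta}$.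 Polarities $p\in\{+,-\}$, $\bar p$ the other; the property $\forall^p$: type variables are $\forall^p$; if $R$ is $\forall^{\bar p}$ and $R'$ is $\forall^p$ then $R\to R'$ is $\forall^p$; if $R$ is $\forall^+$ then $\forall X.R$ is $\forall^+$; if $R$ is $\forall^p$ then so is $R^\cup$; a promotion of $t$ with $t=_{\beta\eta}I$ is $\forall^p$. *)

theory Defs
  imports Main
begin

datatype trm = Var nat | App trm trm | Abs trm

primrec lift :: "trm \<Rightarrow> nat \<Rightarrow> trm" where
  "lift (Var i) k = (if i < k then Var i else Var (Suc i))"
| "lift (App s t) k = App (lift s k) (lift t k)"
| "lift (Abs s) k = Abs (lift s (Suc k))"

primrec subst :: "trm \<Rightarrow> trm \<Rightarrow> nat \<Rightarrow> trm" where
  "subst (Var i) s k = (if k < i then Var (i - 1) else if i = k then s else Var i)"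
| "subst (App t u) s k = App (subst t s k) (subst u s k)"
| "subst (Abs t) s k = Abs (subst t (lift s 0) (Suc k))"

inductive step :: "trm \<Rightarrow> trm \<Rightarrow> bool" where
  beta: "step (App (Abs s) t) (subst s t 0)"
| eta: "step (Abs (App (lift s 0) (Var 0))) s"
| appL: "step s t \<Longrightarrow> step (App s u) (App t u)"
| appR: "step s t \<Longrightarrow> step (App u s) (App u t)"
| abs: "step s t \<Longrightarrow> step (Abs s) (Abs t)"

definition beq :: "trm \<Rightarrow> trm \<Rightarrow> bool" where
  "beq = equivclp step"

definition Id_trm :: trm where
  "Id_trm = Abs (Var 0)"

datatype rtype =
    TVar string
  | Arr rtype rtype
  | All string rtype
  | Conv rtype
  | Comp rtype rtype
  | Prom trm

type_synonym rel = "trm \<Rightarrow> trm \<Rightarrow> bool"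

definition be_closed :: "rel \<Rightarrow> bool" where
  "be_closed r \<longleftrightarrow> (\<forall>t t' u u'. r t t' \<longrightarrow> beq t u \<longrightarrow> beq t' u' \<longrightarrow> r u u')"

primrec interp :: "rtype \<Rightarrow> (string \<Rightarrow> rel) \<Rightarrow> rel" where
  "interp (TVar X) \<gamma> = \<gamma> X"
| "interp (Arr R R') \<gamma> = (\<lambda>t t'. \<forall>a a'. interp R \<gamma> a a' \<longrightarrow> interp R' \<gamma> (App t a) (App t' a'))"
| "interp (All X R) \<gamma> = (\<lambda>t t'. \<forall>r. be_closed r \<longrightarrow> interp R (\<gamma>(X := r)) t t')"
| "interp (Conv R) \<gamma> = (\<lambda>t t'. interp R \<gamma> t' t)"
| "interp (Comp R R') \<gamma> = (\<lambda>t t'. \<exists>t''. interp R \<gamma> t t'' \<and> interp R' \<gamma> t'' t')"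
| "interp (Prom s) \<gamma> = (\<lambda>t t'. beq (App s t) t')"

definition env_e :: "string \<Rightarrow> rel" where
  "env_e = (\<lambda>X. beq)"

text \<open>The polarity property; the boolean True stands for +, False for -.\<close>
inductive forallp :: "bool \<Rightarrow> rtype \<Rightarrow> bool" where
  var: "forallp p (TVar X)"
| arr: "forallp (\<not> p) R \<Longrightarrow> forallp p R' \<Longrightarrow> forallp p (Arr R R')"
| all: "forallp True R \<Longrightarrow> forallp True (All X R)"
| conv: "forallp p R \<Longrightarrow> forallp p (Conv R)"
| prom: "beq t Id_trm \<Longrightarrow> forallp p (Prom t)"

end

theory Submission
  imports Defs
begin

text \<open>Under \<open>env_e\<close> every variable denotes \<open>=\<^sub>\<beta>\<^sub>\<eta>\<close>, and by induction on the polarity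
  judgement a \<open>\<forall>\<^sup>+\<close> type denotes a subrelation of \<open>=\<^sub>\<beta>\<^sub>\<eta>\<close> while a \<open>\<forall>\<^sup>-\<close> type denotes a
  superrelation; the arrow case of the former needs extensionality, which \<open>\<eta>\<close> provides.
  Every interpretation is \<open>\<beta>\<eta>\<close>-closed, so from \<open>x P y\<close> we get \<open>x =\<^sub>\<beta>\<^sub>\<eta> y\<close>, and closure turns
  \<open>y P z\<close> into \<open>x P z\<close>. Finally \<open>I \<lbrakk>R \<rightarrow> R'\<rbrakk> I\<close> just says \<open>\<lbrakk>R\<rbrakk> \<subseteq> \<lbrakk>R'\<rbrakk>\<close>.\<close>

lemma lift_lift: "i \<le> k \<Longrightarrow> lift (lift t i) (Suc k) = lift (lift t k) i"
  by (induct t arbitrary: i k) auto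

lemma lift_subst_ge [simp]:
  "j \<le> i \<Longrightarrow> lift (subst t s j) i = subst (lift t (Suc i)) (lift s i) j"
  by (induct t arbitrary: i j s) (simp_all add: diff_Suc lift_lift split: nat.split)

lemma lift_subst_le:
  "i \<le> j \<Longrightarrow> lift (subst t s j) i = subst (lift t i) (lift s i) (Suc j)"
  by (induct t arbitrary: i j s) (auto simp: lift_lift)

lemma subst_lift [simp]: "subst (lift t k) s k = t"
  by (induct t arbitrary: k s) simp_all

lemma subst_subst:
  "i \<le> j \<Longrightarrow> subst (subst t (lift v i) (Suc j)) (subst u v j) i = subst (subst t u i) v j"
  by (induct t arbitrary: i j u v)
     (simp_all add: diff_Suc lift_lift [symmetric] lift_subst_le split: nat.split)

lemma lift_eq_self_eventually: "\<exists>k. \<forall>j\<ge>k. lift t j = t"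
proof (induct t)
  case (Var i)
  then show ?case by (intro exI[of _ "Suc i"]) auto
next
  case (App s t)
  then obtain k1 k2 where "\<forall>j\<ge>k1. lift s j = s" "\<forall>j\<ge>k2. lift t j = t" by blast
  then show ?case by (intro exI[of _ "max k1 k2"]) auto
next
  case (Abs s)
  then obtain k where "\<forall>j\<ge>k. lift s j = s" by blast
  then show ?case by (intro exI[of _ k]) auto
qed

lemma step_lift: "step s s' \<Longrightarrow> step (lift s i) (lift s' i)"
proof (induct arbitrary: i rule: step.induct)
  case (beta s t)
  show ?case using step.beta[of "lift s (Suc i)" "lift t i"] by simp
next
  case (eta s)
  show ?case using step.eta[of "lift s i"] lift_lift[of 0 i s] by simp
qed (auto intro: step.intros)

lemma step_subst: "step s s' \<Longrightarrow> step (subst s u i) (subst s' u i)"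
proof (induct arbitrary: u i rule: step.induct)
  case (beta s t)
  show ?case
    using step.beta[of "subst s (lift u 0) (Suc i)" "subst t u i"] subst_subst[of 0 i s u t]
    by simp
next
  case (eta s)
  show ?case using step.eta[of "subst s u i"] lift_subst_le[of 0 i s u] by simp
qed (auto intro: step.intros)

lemma beq_refl [simp]: "beq a a"
  by (simp add: beq_def)

lemma beq_sym: "beq a b \<Longrightarrow> beq b a"
  by (simp add: beq_def equivclp_sym)

lemma beq_trans: "beq a b \<Longrightarrow> beq b c \<Longrightarrow> beq a c"
  unfolding beq_def by (rule equivclp_trans)

lemma step_imp_beq: "step a b \<Longrightarrow> beq a b"
  by (auto simp: beq_def)

lemma beq_map:
  assumes "\<And>s s'. step s s' \<Longrightarrow> step (f s) (f s')" and "beq a b"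
  shows "beq (f a) (f b)"
  using assms(2) unfolding beq_def
proof (induct rule: equivclp_induct)
  case (step y z)
  then show ?case using assms(1) by (meson equivclp_into_equivclp)
qed simp

lemma beq_App: "beq a b \<Longrightarrow> beq c d \<Longrightarrow> beq (App a c) (App b d)"
proof -
  assume "beq a b" "beq c d"
  then have "beq (App a c) (App b c)" "beq (App b c) (App b d)"
    by (auto intro: beq_map step.intros)
  then show ?thesis by (rule beq_trans)
qed

lemma beq_Abs: "beq a b \<Longrightarrow> beq (Abs a) (Abs b)"
  by (rule beq_map) (auto intro: step.intros)

lemma beq_App_Id: "beq (App Id_trm a) a"
  unfolding Id_trm_def using step_imp_beq[OF step.beta[of "Var 0" a]] by simp

text \<open>Apply both terms to a variable \<open>k\<close> free in neither, rename \<open>k\<close> to the bound variable of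
  an abstraction and \<open>\<eta>\<close>-contract.\<close>

lemma beq_ext:
  assumes "\<And>a. beq (App t a) (App t' a)"
  shows "beq t t'"
proof -
  obtain k1 k2 where k1_k2: "\<forall>j\<ge>k1. lift t j = t" "\<forall>j\<ge>k2. lift t' j = t'"
    using lift_eq_self_eventually by blast
  define k where "k = max k1 k2"
  have lift_k: "lift t k = t" "lift t' k = t'" using k1_k2 by (simp_all add: k_def)
  define f where "f s = subst (lift s 0) (Var 0) (Suc k)" for s
  have f_lift: "f u = lift u 0" if "lift u k = u" for u
  proof -
    have "lift u 0 = lift (lift u 0) (Suc k)" using that lift_lift[of 0 k u] by simp
    then show ?thesis unfolding f_def by (metis subst_lift)
  qed
  have "beq (f (App t (Var k))) (f (App t' (Var k)))"
    by (rule beq_map[OF _ assms]) (simp add: f_def step_lift step_subst)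
  then have "beq (Abs (App (lift t 0) (Var 0))) (Abs (App (lift t' 0) (Var 0)))"
    using f_lift[OF lift_k(1)] f_lift[OF lift_k(2)] by (simp add: f_def beq_Abs)
  moreover have "beq (Abs (App (lift t 0) (Var 0))) t" "beq (Abs (App (lift t' 0) (Var 0))) t'"
    by (rule step_imp_beq, rule step.eta)+
  ultimately show ?thesis by (meson beq_sym beq_trans)
qed

lemma be_closedI:
  "(\<And>t t' u u'. r t t' \<Longrightarrow> beq t u \<Longrightarrow> beq t' u' \<Longrightarrow> r u u') \<Longrightarrow> be_closed r"
  unfolding be_closed_def by blast

lemma be_closedD: "be_closed r \<Longrightarrow> r t t' \<Longrightarrow> beq t u \<Longrightarrow> beq t' u' \<Longrightarrow> r u u'"
  unfolding be_closed_def by blast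

lemma be_closed_beq: "be_closed beq"
  by (rule be_closedI) (meson beq_sym beq_trans)

lemma be_closed_interp: "(\<And>X. be_closed (\<gamma> X)) \<Longrightarrow> be_closed (interp R \<gamma>)"
proof (induct R arbitrary: \<gamma>)
  case (Arr R1 R2)
  then have "be_closed (interp R2 \<gamma>)" by blast
  then show ?case
    by (intro be_closedI) (simp, meson be_closedD beq_App beq_refl)
next
  case (All X R)
  then have "be_closed (interp R (\<gamma>(X := r)))" if "be_closed r" for r
    using that by simp
  then show ?case
    by (intro be_closedI) (simp, meson be_closedD)
next
  case (Comp R1 R2)
  then have "be_closed (interp R1 \<gamma>)" "be_closed (interp R2 \<gamma>)" by blast+
  then show ?case
    by (intro be_closedI) (simp, meson be_closedD beq_refl)
next
  case (Prom s)
  show ?case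
    by (intro be_closedI) (simp, meson beq_App beq_refl beq_sym beq_trans)
qed (auto simp: be_closed_def)

lemma be_closed_interp_env_e: "be_closed (interp R env_e)"
  by (rule be_closed_interp) (simp add: env_e_def be_closed_beq)

lemma interp_Arr_Id_Id_iff:
  assumes "be_closed (interp R' \<gamma>)"
  shows "interp (Arr R R') \<gamma> Id_trm Id_trm \<longleftrightarrow> (\<forall>a a'. interp R \<gamma> a a' \<longrightarrow> interp R' \<gamma> a a')"
proof -
  have "interp R' \<gamma> (App Id_trm a) (App Id_trm a') \<longleftrightarrow> interp R' \<gamma> a a'" for a a'
    using be_closedD[OF assms] beq_App_Id beq_sym by blast
  then show ?thesis by simp
qed

lemma forallp_interp_env_e:
  "forallp p R \<Longrightarrow>
     (p \<longrightarrow> (\<forall>a b. interp R env_e a b \<longrightarrow> beq a b)) \<and>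
     (\<not> p \<longrightarrow> (\<forall>a b. beq a b \<longrightarrow> interp R env_e a b))"
proof (induct rule: forallp.induct)
  case (var p X)
  then show ?case by (simp add: env_e_def)
next
  case (arr p R R')
  show ?case
  proof (intro conjI impI allI)
    fix a b
    assume "p" and "interp (Arr R R') env_e a b"
    then have "beq (App a c) (App b c)" for c using arr by simp
    then show "beq a b" by (rule beq_ext)
  next
    fix a b
    assume "\<not> p" and "beq a b"
    then show "interp (Arr R R') env_e a b" using arr by (simp add: beq_App)
  qed
next
  case (all R X)
  have "env_e(X := beq) = env_e" by (auto simp: env_e_def)
  then have "interp (All X R) env_e a b \<Longrightarrow> interp R env_e a b" for a b
    using be_closed_beq by (metis interp.simps(3))
  then show ?case using all by blast
next
  case (conv p R)
  then show ?case by (simp add: beq_sym)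
next
  case (prom t p)
  then have "beq (App t a) a" for a
    using beq_App[OF prom.hyps beq_refl] beq_App_Id beq_trans by blast
  then show ?case by simp (meson beq_sym beq_trans)
qed

theorem mainTheorem11:
  assumes "forallp True P"
  shows "interp (Arr (Comp P P) P) env_e Id_trm Id_trm \<and>
         (\<forall>x y z. interp P env_e x y \<longrightarrow> interp P env_e y z \<longrightarrow> interp P env_e x z)"
proof -
  have P_beq: "interp P env_e a b \<Longrightarrow> beq a b" for a b
    using forallp_interp_env_e[OF assms] by simp
  have P_trans: "\<forall>x y z. interp P env_e x y \<longrightarrow> interp P env_e y z \<longrightarrow> interp P env_e x z"
    using P_beq be_closedD[OF be_closed_interp_env_e] by (meson beq_refl beq_sym)
  then show ?thesis
    unfolding interp_Arr_Id_Id_iff[OF be_closed_interp_env_e] by auto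
qed

end
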